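(* Let $\zeta>1$. If a distribution $\mu$ over $\{-1,+1\}^n$ is completely $\zeta$-marginally stable, then for every integer $k\ge1$, the $k$-transformed distribution $\mu_k=\mathrm{Rd}(\mu,k)$ is $2\zeta$-marginally stable.
   Context: For a distribution $\nu$ on $\{-1,+1\}^N$: $\Omega(\nu)$ support, $\nu_\Lambda$ marginal, $\nu^\sigma$ conditional given $\sigma\in\Omega(\nu_\Lambda)$. $\nu$ is $\zeta$-marginally stable if for every $i\in N$, every $S\subseteq\Lambda\subseteq N\setminus\{i\}$, and every $\sigma\in\Omega(\nu_\Lambda)$, $R_i^\sigma\le\zeta$ and $R_i^\sigma\le\zeta R_i^{\sigma_S}$, where $R_i^\sigma=\nu_i^\sigma(+1)/\nu_i^\sigma(-1)$. $\mu$ is completely $\zeta$-marginally stable if $(\boldsymbol\lambda*\mu)$ is $\zeta$-marginally stable for all $\boldsymbol\lambda\in(0,1]^n$, where $(\boldsymbol\lambda*\mu)(\sigma)\propto\mu(\sigma)\prod_{i:\sigma_i=+1}\lambda_i$. $k$-transformation: $\mathrm{Rd}(\mu,k)$ is the law of $Y\in\{-1,+1\}^{[n]\times[k]}$ obtained from $X\sim\mu$: if $X_i=-1$, $Y_{(i,j)}=-1$ for all $j$; if $X_i=+1$, $Y_{(i,j^* )}=+1$ and $Y_{(i,j)}=-1$ for $j\ne j^*$, with $j^*$ uniform in $[k]$ independently. *)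

theory Defs
  imports "HOL-Analysis.Analysis"
begin

text \<open>Configurations in {-1,+1}^N are extensional functions N \<rightarrow>E {-1,1};
  a (possibly partial) configuration on \<Lambda> is an element of \<Lambda> \<rightarrow>E {-1,1}.\<close>

definition cube :: "'i set \<Rightarrow> ('i \<Rightarrow> int) set" where
  "cube N = N \<rightarrow>\<^sub>E {-1, 1}"

definition is_dist :: "'i set \<Rightarrow> (('i \<Rightarrow> int) \<Rightarrow> real) \<Rightarrow> bool" where
  "is_dist N \<nu> \<longleftrightarrow> finite N \<and> (\<forall>x\<in>cube N. 0 \<le> \<nu> x) \<and> (\<Sum>x\<in>cube N. \<nu> x) = 1"

definition marg :: "'i set \<Rightarrow> (('i \<Rightarrow> int) \<Rightarrow> real) \<Rightarrow> 'i set \<Rightarrow> ('i \<Rightarrow> int) \<Rightarrow> real" where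
  "marg N \<nu> \<Lambda> \<sigma> = (\<Sum>x\<in>{x\<in>cube N. restrict x \<Lambda> = \<sigma>}. \<nu> x)"

definition supp_marg :: "'i set \<Rightarrow> (('i \<Rightarrow> int) \<Rightarrow> real) \<Rightarrow> 'i set \<Rightarrow> ('i \<Rightarrow> int) set" where
  "supp_marg N \<nu> \<Lambda> = {\<sigma>\<in>cube \<Lambda>. marg N \<nu> \<Lambda> \<sigma> > 0}"

definition cond_marg :: "'i set \<Rightarrow> (('i \<Rightarrow> int) \<Rightarrow> real) \<Rightarrow> 'i set \<Rightarrow> ('i \<Rightarrow> int) \<Rightarrow> 'i \<Rightarrow> int \<Rightarrow> real" where
  "cond_marg N \<nu> \<Lambda> \<sigma> i c = marg N \<nu> (insert i \<Lambda>) (\<sigma>(i := c)) / marg N \<nu> \<Lambda> \<sigma>"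

definition ratio :: "'i set \<Rightarrow> (('i \<Rightarrow> int) \<Rightarrow> real) \<Rightarrow> 'i set \<Rightarrow> ('i \<Rightarrow> int) \<Rightarrow> 'i \<Rightarrow> ereal" where
  "ratio N \<nu> \<Lambda> \<sigma> i =
     (if cond_marg N \<nu> \<Lambda> \<sigma> i (-1) = 0 then \<infinity>
      else ereal (cond_marg N \<nu> \<Lambda> \<sigma> i 1 / cond_marg N \<nu> \<Lambda> \<sigma> i (-1)))"

definition marg_stable :: "'i set \<Rightarrow> real \<Rightarrow> (('i \<Rightarrow> int) \<Rightarrow> real) \<Rightarrow> bool" where
  "marg_stable N \<zeta> \<nu> \<longleftrightarrow>
     (\<forall>i\<in>N. \<forall>\<Lambda> S. S \<subseteq> \<Lambda> \<and> \<Lambda> \<subseteq> N - {i} \<longrightarrow>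
        (\<forall>\<sigma>\<in>supp_marg N \<nu> \<Lambda>.
           ratio N \<nu> \<Lambda> \<sigma> i \<le> ereal \<zeta> \<and>
           ratio N \<nu> \<Lambda> \<sigma> i \<le> ereal \<zeta> * ratio N \<nu> S (restrict \<sigma> S) i))"

definition tilt :: "'i set \<Rightarrow> ('i \<Rightarrow> real) \<Rightarrow> (('i \<Rightarrow> int) \<Rightarrow> real) \<Rightarrow> ('i \<Rightarrow> int) \<Rightarrow> real" where
  "tilt N lam \<mu> x =
     (\<mu> x * (\<Prod>i\<in>{i\<in>N. x i = 1}. lam i)) /
     (\<Sum>y\<in>cube N. \<mu> y * (\<Prod>i\<in>{i\<in>N. y i = 1}. lam i))"

definition completely_marg_stable :: "'i set \<Rightarrow> real \<Rightarrow> (('i \<Rightarrow> int) \<Rightarrow> real) \<Rightarrow> bool" where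
  "completely_marg_stable N \<zeta> \<mu> \<longleftrightarrow>
     (\<forall>lam. (\<forall>i\<in>N. 0 < lam i \<and> lam i \<le> 1) \<longrightarrow> marg_stable N \<zeta> (tilt N lam \<mu>))"

text \<open>k-transformation Rd(\<mu>,k) on {-1,+1}^(N \<times> [k]), as an explicit probability mass function:
  Y has at most one +1 in each block {i} \<times> [k]; X_i = +1 iff block i contains a +1; and
  P(Y) = \<mu>(X) * k^{-#\{i. X_i = +1\}}.\<close>
definition rd_proj :: "'i set \<Rightarrow> nat \<Rightarrow> ('i \<times> nat \<Rightarrow> int) \<Rightarrow> ('i \<Rightarrow> int)" where
  "rd_proj N k y = (\<lambda>i\<in>N. if \<exists>j\<in>{1..k}. y (i, j) = 1 then 1 else -1)"

definition Rd :: "'i set \<Rightarrow> (('i \<Rightarrow> int) \<Rightarrow> real) \<Rightarrow> nat \<Rightarrow> ('i \<times> nat \<Rightarrow> int) \<Rightarrow> real" where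
  "Rd N \<mu> k y =
     (if y \<in> cube (N \<times> {1..k}) \<and> (\<forall>i\<in>N. card {j\<in>{1..k}. y (i, j) = 1} \<le> 1)
      then \<mu> (rd_proj N k y) / real k ^ card {i\<in>N. rd_proj N k y i = 1}
      else 0)"

end

theory Submission
  imports Defs
begin

text \<open>Conditioning \<open>Rd(\<mu>, k)\<close> on a partial configuration \<open>\<sigma>\<close> of \<open>N \<times> [k]\<close> reweights \<open>\<mu>\<close> by a
  product of block weights \<open>w\<^sub>l(X\<^sub>l)\<close> with \<open>w\<^sub>l(-1) \<in> {0, 1}\<close> and \<open>w\<^sub>l(+1) \<in> [0, 1]\<close>. Such a product is a
  pinning of some sites combined with an external field \<open>\<lambda> \<le> 1\<close> on the others, so complete
  \<open>\<zeta>\<close>-marginal stability of \<open>\<mu>\<close> bounds the flip ratios \<open>\<mu>(x) / \<mu>(x with x\<^sub>i = -1)\<close>, and hence the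
  weighted masses \<open>A\<close>, \<open>B\<close> of \<open>{X\<^sub>i = +1}\<close> and \<open>{X\<^sub>i = -1}\<close>: \<open>A \<le> \<zeta> B\<close> and \<open>A B\<^sub>S \<le> \<zeta> B A\<^sub>S\<close> for
  the masses \<open>A\<^sub>S\<close>, \<open>B\<^sub>S\<close> of a coarser pinning \<open>S\<close>. At a site \<open>(i, j)\<close> the marginal of \<open>+1\<close> is
  \<open>A / k\<close> if block \<open>i\<close> of \<open>\<sigma>\<close> shows no \<open>+1\<close> (and \<open>0\<close> otherwise), while the marginal of \<open>-1\<close> is
  \<open>c A + B\<close> for some \<open>c \<in> [0, 1]\<close>; the factor \<open>2\<close> absorbs the unknown \<open>c\<^sub>S \<le> 1\<close> of the coarser
  pinning.\<close>

section \<open>Marginals and conditional ratios\<close>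

lemma finite_cube: "finite N \<Longrightarrow> finite (cube N)"
  by (simp add: cube_def finite_PiE)

lemma cube_value: "x \<in> cube N \<Longrightarrow> l \<in> N \<Longrightarrow> x l = 1 \<or> x l = -1"
  by (auto simp: cube_def PiE_iff)

lemma fun_upd_in_cube: "x \<in> cube N \<Longrightarrow> i \<in> N \<Longrightarrow> c = 1 \<or> c = -1 \<Longrightarrow> x(i := c) \<in> cube N"
  by (auto simp: cube_def PiE_iff extensional_def)

lemma restrict_insert_eq_fun_upd:
  assumes "\<sigma> \<in> extensional \<Lambda>" "i \<notin> \<Lambda>"
  shows "restrict x (insert i \<Lambda>) = \<sigma>(i := c) \<longleftrightarrow> restrict x \<Lambda> = \<sigma> \<and> x i = c"
proof
  assume eq: "restrict x (insert i \<Lambda>) = \<sigma>(i := c)"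
  show "restrict x \<Lambda> = \<sigma> \<and> x i = c"
  proof
    show "restrict x \<Lambda> = \<sigma>"
    proof
      fix l show "restrict x \<Lambda> l = \<sigma> l"
        using fun_cong[OF eq, of l] assms by (cases "l \<in> \<Lambda>") (auto simp: extensional_def split: if_splits)
    qed
  qed (use fun_cong[OF eq, of i] in simp)
next
  assume "restrict x \<Lambda> = \<sigma> \<and> x i = c"
  then show "restrict x (insert i \<Lambda>) = \<sigma>(i := c)"
    using assms by (auto simp: fun_eq_iff extensional_def)
qed

lemma marg_insert:
  assumes "\<sigma> \<in> extensional \<Lambda>" "i \<notin> \<Lambda>"
  shows "marg N \<nu> (insert i \<Lambda>) (\<sigma>(i := c)) = (\<Sum>x\<in>{x\<in>cube N. restrict x \<Lambda> = \<sigma> \<and> x i = c}. \<nu> x)"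
  unfolding marg_def restrict_insert_eq_fun_upd[OF assms] ..

lemma marg_split:
  assumes "finite N" "i \<in> N" "i \<notin> \<Lambda>" "\<sigma> \<in> extensional \<Lambda>"
  shows "marg N \<nu> \<Lambda> \<sigma> = marg N \<nu> (insert i \<Lambda>) (\<sigma>(i := 1)) + marg N \<nu> (insert i \<Lambda>) (\<sigma>(i := -1))"
proof -
  have "{x\<in>cube N. restrict x \<Lambda> = \<sigma>} =
      {x\<in>cube N. restrict x \<Lambda> = \<sigma> \<and> x i = 1} \<union> {x\<in>cube N. restrict x \<Lambda> = \<sigma> \<and> x i = -1}"
    using cube_value[OF _ assms(2)] by auto
  then show ?thesis
    unfolding marg_insert[OF assms(4,3)] unfolding marg_def
    by (auto intro: sum.union_disjoint finite_subset[OF _ finite_cube[OF assms(1)]])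
qed

lemma marg_nonneg: "\<forall>x\<in>cube N. 0 \<le> \<nu> x \<Longrightarrow> 0 \<le> marg N \<nu> \<Lambda> \<sigma>"
  unfolding marg_def by (rule sum_nonneg) auto

lemma marg_antimono:
  assumes "finite N" "\<forall>x\<in>cube N. 0 \<le> \<nu> x" "S \<subseteq> \<Lambda>"
  shows "marg N \<nu> \<Lambda> \<sigma> \<le> marg N \<nu> S (restrict \<sigma> S)"
  unfolding marg_def
proof (rule sum_mono2)
  show "{x \<in> cube N. restrict x \<Lambda> = \<sigma>} \<subseteq> {x \<in> cube N. restrict x S = restrict \<sigma> S}"
    using assms(3) by (auto simp: fun_eq_iff restrict_def)
qed (use assms finite_cube[OF assms(1)] in auto)

lemma marg_cube: "x \<in> cube N \<Longrightarrow> marg N \<nu> N x = \<nu> x"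
proof -
  assume "x \<in> cube N"
  then have "{y\<in>cube N. restrict y N = x} = {x}" by (auto simp: cube_def)
  then show ?thesis by (simp add: marg_def)
qed

definition ereal_ratio :: "real \<Rightarrow> real \<Rightarrow> ereal" where
  "ereal_ratio a b = (if b = 0 then \<infinity> else ereal (a / b))"

lemma ratio_eq_ereal_ratio:
  "0 < marg N \<nu> \<Lambda> \<sigma> \<Longrightarrow>
   ratio N \<nu> \<Lambda> \<sigma> i = ereal_ratio (marg N \<nu> (insert i \<Lambda>) (\<sigma>(i := 1))) (marg N \<nu> (insert i \<Lambda>) (\<sigma>(i := -1)))"
  by (simp add: ratio_def cond_marg_def ereal_ratio_def)

lemma ratio_nonneg: "\<forall>x\<in>cube N. 0 \<le> \<nu> x \<Longrightarrow> 0 \<le> ratio N \<nu> \<Lambda> \<sigma> i"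
  using marg_nonneg[of N \<nu>] unfolding ratio_def cond_marg_def by auto

lemma ereal_ratio_le_ereal_imp:
  "ereal_ratio a b \<le> ereal z \<Longrightarrow> 0 \<le> b \<Longrightarrow> 0 < b \<and> a \<le> z * b"
  by (cases "b = 0") (auto simp: ereal_ratio_def divide_le_eq)

lemma ereal_ratio_le_mult_imp:
  assumes "ereal_ratio a b \<le> ereal z * ereal_ratio c d" "0 < b" "0 \<le> c" "0 \<le> d" "0 \<le> z"
  shows "a * d \<le> z * b * c"
  using assms by (cases "d = 0") (auto simp: ereal_ratio_def field_simps)

lemma marg_remove_site:
  assumes fin: "finite N" and i: "i \<in> N" and x: "x \<in> cube N" "x i = 1"
  shows "marg N \<nu> (N - {i}) (restrict x (N - {i})) = \<nu> x + \<nu> (x(i := -1))"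
    and "0 < marg N \<nu> (N - {i}) (restrict x (N - {i})) \<Longrightarrow>
      ratio N \<nu> (N - {i}) (restrict x (N - {i})) i = ereal_ratio (\<nu> x) (\<nu> (x(i := -1)))"
proof -
  have x_ext: "x l = undefined" if "l \<notin> N" for l
    using x(1) that by (auto simp: cube_def PiE_iff extensional_def)
  have upd: "(restrict x (N - {i}))(i := 1) = x" "(restrict x (N - {i}))(i := -1) = x(i := -1)"
    using x(2) x_ext by (auto simp: fun_eq_iff)
  have N: "insert i (N - {i}) = N"
    using i by auto
  note marg_x = marg_cube[OF x(1)] marg_cube[OF fun_upd_in_cube[OF x(1) i, of "-1"]]
  show "marg N \<nu> (N - {i}) (restrict x (N - {i})) = \<nu> x + \<nu> (x(i := -1))"
    using marg_split[OF fin i, of "N - {i}" "restrict x (N - {i})" \<nu>] N upd marg_x by simp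
  show "ratio N \<nu> (N - {i}) (restrict x (N - {i})) i = ereal_ratio (\<nu> x) (\<nu> (x(i := -1)))"
    if "0 < marg N \<nu> (N - {i}) (restrict x (N - {i}))"
    using ratio_eq_ereal_ratio[OF that, of i] N upd marg_x by simp
qed

text \<open>Marginal stability is applied with \<open>\<Lambda> = N - {i}\<close>, where the conditional ratio at \<open>x\<close> is
  \<open>\<nu>(x) / \<nu>(x(i := -1))\<close>, and \<open>S = P\<close>.\<close>

lemma marg_stable_flip_bounds:
  assumes stable: "marg_stable N \<zeta> \<nu>" and fin: "finite N" and nonneg: "\<forall>x\<in>cube N. 0 \<le> \<nu> x"
    and i: "i \<in> N" and x: "x \<in> cube N" "x i = 1" and P: "P \<subseteq> N - {i}"
  shows "\<nu> x \<le> \<zeta> * \<nu> (x(i := -1))"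
    and "\<nu> x * marg N \<nu> (insert i P) ((restrict x P)(i := -1))
      \<le> \<zeta> * \<nu> (x(i := -1)) * marg N \<nu> (insert i P) ((restrict x P)(i := 1))"
proof -
  define x' where "x' = x(i := -1)"
  define \<sigma> where "\<sigma> = restrict x (N - {i})"
  define m where "m c = marg N \<nu> (insert i P) ((restrict x P)(i := c))" for c
  have x': "x' \<in> cube N"
    unfolding x'_def using fun_upd_in_cube[OF x(1) i] by simp
  have "\<nu> x \<le> \<zeta> * \<nu> x' \<and> \<nu> x * m (-1) \<le> \<zeta> * \<nu> x' * m 1"
  proof (cases "\<nu> x + \<nu> x' = 0")
    case True
    then have "\<nu> x = 0" "\<nu> x' = 0"
      using nonneg x(1) x' by (simp_all add: add_nonneg_eq_0_iff)
    then show ?thesis by simp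
  next
    case False
    then have pos: "0 < marg N \<nu> (N - {i}) \<sigma>"
      using marg_remove_site(1)[OF fin i x] nonneg x(1) x' by (simp add: \<sigma>_def x'_def order_less_le)
    then have "\<sigma> \<in> supp_marg N \<nu> (N - {i})"
      using x(1) by (auto simp: supp_marg_def \<sigma>_def cube_def)
    then have bounds: "ratio N \<nu> (N - {i}) \<sigma> i \<le> ereal \<zeta>"
        "ratio N \<nu> (N - {i}) \<sigma> i \<le> ereal \<zeta> * ratio N \<nu> P (restrict \<sigma> P) i"
      using stable i P unfolding marg_stable_def by blast+
    have ratio_\<sigma>: "ratio N \<nu> (N - {i}) \<sigma> i = ereal_ratio (\<nu> x) (\<nu> x')"
      using marg_remove_site(2)[OF fin i x] pos by (simp add: \<sigma>_def x'_def)
    have restrict_\<sigma>: "restrict \<sigma> P = restrict x P"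
      using P by (auto simp: \<sigma>_def fun_eq_iff)
    have "0 < marg N \<nu> P (restrict x P)"
      using marg_antimono[OF fin nonneg P, of \<sigma>] pos restrict_\<sigma> by simp
    then have ratio_P: "ratio N \<nu> P (restrict \<sigma> P) i = ereal_ratio (m 1) (m (-1))"
      unfolding restrict_\<sigma> m_def by (rule ratio_eq_ereal_ratio)
    have x'_pos: "0 < \<nu> x'" and first: "\<nu> x \<le> \<zeta> * \<nu> x'"
      using ereal_ratio_le_ereal_imp[of "\<nu> x" "\<nu> x'" \<zeta>] bounds(1) ratio_\<sigma> nonneg x' by auto
    moreover have "0 \<le> \<zeta>"
      using first x'_pos nonneg x(1) by (meson order_trans zero_le_mult_iff not_le)
    ultimately show ?thesis
      using ereal_ratio_le_mult_imp[of "\<nu> x" "\<nu> x'" \<zeta> "m 1" "m (-1)"] bounds(2) ratio_\<sigma>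
        ratio_P marg_nonneg[OF nonneg] by (simp add: m_def)
  qed
  then show "\<nu> x \<le> \<zeta> * \<nu> (x(i := -1))"
    and "\<nu> x * marg N \<nu> (insert i P) ((restrict x P)(i := -1))
      \<le> \<zeta> * \<nu> (x(i := -1)) * marg N \<nu> (insert i P) ((restrict x P)(i := 1))"
    by (simp_all add: x'_def m_def)
qed

section \<open>Weighted masses and complete marginal stability\<close>

definition weighted_mass :: "'i set \<Rightarrow> (('i \<Rightarrow> int) \<Rightarrow> real) \<Rightarrow> ('i \<Rightarrow> int \<Rightarrow> real) \<Rightarrow> 'i \<Rightarrow> int \<Rightarrow> real" where
  "weighted_mass N \<mu> w i c = (\<Sum>x\<in>{x\<in>cube N. x i = c}. \<mu> x * (\<Prod>l\<in>N - {i}. w l (x l)))"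

lemma weight_prod_nonneg:
  fixes w :: "'i \<Rightarrow> int \<Rightarrow> real"
  shows "x \<in> cube N \<Longrightarrow> \<forall>l\<in>N - {i}. 0 \<le> w l 1 \<and> 0 \<le> w l (-1) \<Longrightarrow> 0 \<le> (\<Prod>l\<in>N - {i}. w l (x l))"
  by (rule prod_nonneg) (metis DiffD1 cube_value)

lemma weighted_mass_nonneg:
  assumes "\<forall>x\<in>cube N. 0 \<le> \<mu> x" "\<forall>l\<in>N - {i}. 0 \<le> w l 1 \<and> 0 \<le> w l (-1)"
  shows "0 \<le> weighted_mass N \<mu> w i c"
  unfolding weighted_mass_def using assms weight_prod_nonneg[of _ N i w]
  by (intro sum_nonneg mult_nonneg_nonneg) auto

lemma weighted_mass_cong:
  "(\<And>l. l \<in> N - {i} \<Longrightarrow> w l = w' l) \<Longrightarrow> weighted_mass N \<mu> w i c = weighted_mass N \<mu> w' i c"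
  unfolding weighted_mass_def by (intro sum.cong refl arg_cong2[where f = "(*)"] prod.cong) auto

lemma sum_weight_prod_split:
  assumes "finite N" "i \<in> N"
  shows "(\<Sum>x\<in>cube N. \<mu> x * (\<Prod>l\<in>N. w l (x l))) =
    w i 1 * weighted_mass N \<mu> w i 1 + w i (-1) * weighted_mass N \<mu> w i (-1)"
proof -
  have split: "cube N = {x\<in>cube N. x i = 1} \<union> {x\<in>cube N. x i = -1}"
    using cube_value[OF _ assms(2)] by auto
  have "(\<Sum>x\<in>cube N. \<mu> x * (\<Prod>l\<in>N. w l (x l))) =
      (\<Sum>x\<in>{x\<in>cube N. x i = 1}. \<mu> x * (\<Prod>l\<in>N. w l (x l))) +
      (\<Sum>x\<in>{x\<in>cube N. x i = -1}. \<mu> x * (\<Prod>l\<in>N. w l (x l)))"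
    by (subst split, rule sum.union_disjoint) (use finite_cube[OF assms(1)] in auto)
  also have "\<dots> = w i 1 * weighted_mass N \<mu> w i 1 + w i (-1) * weighted_mass N \<mu> w i (-1)"
    unfolding weighted_mass_def sum_distrib_left
    by (intro arg_cong2[where f = "(+)"] sum.cong) (auto simp: prod.remove[OF assms])
  finally show ?thesis .
qed

text \<open>Flipping site \<open>i\<close> from \<open>+1\<close> to \<open>-1\<close> is a bijection between the two halves of the cube that
  leaves the weight product unchanged, so a bound on \<open>\<mu>(x) / \<mu>(x(i := -1))\<close> transfers to the
  weighted masses.\<close>

lemma weighted_mass_le_weighted_mass:
  assumes "finite N" "i \<in> N" "\<forall>x\<in>cube N. 0 \<le> \<mu> x" "\<forall>l\<in>N - {i}. 0 \<le> w l 1 \<and> 0 \<le> w l (-1)"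
    and bound: "\<And>x. x \<in> cube N \<Longrightarrow> x i = 1 \<Longrightarrow> 0 < (\<Prod>l\<in>N - {i}. w l (x l)) \<Longrightarrow>
      \<mu> x * b \<le> c * \<mu> (x(i := -1)) * a"
  shows "weighted_mass N \<mu> w i 1 * b \<le> c * weighted_mass N \<mu> w i (-1) * a"
proof -
  define W where "W x = (\<Prod>l\<in>N - {i}. w l (x l))" for x
  define X where "X = {x\<in>cube N. x i = 1}"
  have W_flip: "W (x(i := -1)) = W x" for x
    unfolding W_def by (rule prod.cong) auto
  have "bij_betw (\<lambda>x. x(i := -1)) X {x\<in>cube N. x i = -1}"
  proof (rule bij_betw_byWitness[where f' = "\<lambda>x. x(i := 1)"])
  qed (use fun_upd_in_cube[OF _ assms(2)] in \<open>auto simp: X_def\<close>)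
  then have minus: "weighted_mass N \<mu> w i (-1) = (\<Sum>x\<in>X. \<mu> (x(i := -1)) * W x)"
    unfolding weighted_mass_def W_def[symmetric] by (simp add: sum.reindex_bij_betw[symmetric] W_flip)
  have "weighted_mass N \<mu> w i 1 * b = (\<Sum>x\<in>X. \<mu> x * b * W x)"
    unfolding weighted_mass_def X_def W_def sum_distrib_right by (simp add: algebra_simps)
  also have "\<dots> \<le> (\<Sum>x\<in>X. c * \<mu> (x(i := -1)) * a * W x)"
  proof (rule sum_mono)
    fix x assume "x \<in> X"
    then show "\<mu> x * b * W x \<le> c * \<mu> (x(i := -1)) * a * W x"
      using bound[of x] weight_prod_nonneg[of x N i w] assms(4)
      by (cases "W x = 0") (auto simp: X_def W_def intro!: mult_right_mono)
  qed
  also have "\<dots> = c * weighted_mass N \<mu> w i (-1) * a"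
    unfolding minus by (simp add: sum_distrib_left sum_distrib_right algebra_simps)
  finally show ?thesis .
qed

definition field_factor :: "'i set \<Rightarrow> ('i \<Rightarrow> real) \<Rightarrow> ('i \<Rightarrow> int) \<Rightarrow> real" where
  "field_factor N lam x = (\<Prod>l\<in>N. if x l = 1 then lam l else 1)"

lemma tilt_eq_field_factor:
  "finite N \<Longrightarrow>
    tilt N lam \<mu> x = \<mu> x * field_factor N lam x / (\<Sum>y\<in>cube N. \<mu> y * field_factor N lam y)"
  by (simp add: tilt_def field_factor_def prod.inter_filter)

lemma field_factor_pos: "(\<And>l. l \<in> N \<Longrightarrow> 0 < lam l) \<Longrightarrow> 0 < field_factor N lam x"
  unfolding field_factor_def by (intro prod_pos) auto

lemma tilt_normaliser_pos:
  assumes "is_dist N \<mu>" "\<And>y. y \<in> cube N \<Longrightarrow> 0 < F y"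
  shows "0 < (\<Sum>y\<in>cube N. \<mu> y * F y)"
proof -
  have fin: "finite (cube N)" and nonneg: "\<forall>y\<in>cube N. 0 \<le> \<mu> y" and "sum \<mu> (cube N) = 1"
    using assms(1) finite_cube by (auto simp: is_dist_def)
  then obtain y where "y \<in> cube N" "0 < \<mu> y"
    by (metis less_eq_real_def sum_nonpos zero_less_one not_le)
  moreover have "0 \<le> \<mu> z * F z" if "z \<in> cube N" for z
    using that nonneg assms(2)[OF that] by simp
  ultimately show ?thesis
    using fin assms(2) by (intro sum_pos2[of _ y]) auto
qed

text \<open>Weights of this shape combine a pinning, on the sites where one of the two weights vanishes,
  with the external field \<open>\<lambda>\<^sub>l = w\<^sub>l(+1)\<close> on the remaining sites.\<close>

definition pin_field_weights :: "'i set \<Rightarrow> 'i \<Rightarrow> ('i \<Rightarrow> int \<Rightarrow> real) \<Rightarrow> bool" where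
  "pin_field_weights N i w \<longleftrightarrow> (\<forall>l\<in>N - {i}. w l (-1) \<in> {0, 1} \<and> w l 1 \<in> {0..1})"

definition pinned_sites :: "'i set \<Rightarrow> ('i \<Rightarrow> int \<Rightarrow> real) \<Rightarrow> 'i \<Rightarrow> 'i set" where
  "pinned_sites N w i = {l\<in>N - {i}. w l 1 = 0 \<or> w l (-1) = 0}"

definition weight_field :: "('i \<Rightarrow> int \<Rightarrow> real) \<Rightarrow> 'i \<Rightarrow> 'i \<Rightarrow> real" where
  "weight_field w i l = (if l \<noteq> i \<and> w l 1 \<noteq> 0 then w l 1 else 1)"

lemma weight_field_bounds:
  "pin_field_weights N i w \<Longrightarrow> l \<in> N \<Longrightarrow> 0 < weight_field w i l \<and> weight_field w i l \<le> 1"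
  by (auto simp: pin_field_weights_def weight_field_def less_le)

lemma weight_prod_eq_pinned_field:
  assumes fin: "finite N" and i: "i \<in> N" and w: "pin_field_weights N i w"
    and x: "x \<in> cube N" and x_pos: "0 < (\<Prod>l\<in>N - {i}. w l (x l))" and z: "z \<in> cube N"
  shows "(\<Prod>l\<in>N - {i}. w l (z l)) =
    (if restrict z (pinned_sites N w i) = restrict x (pinned_sites N w i)
     then field_factor N (weight_field w i) z else 0)"
proof -
  let ?P = "pinned_sites N w i"
  have x_nonzero: "w l (x l) \<noteq> 0" if "l \<in> N - {i}" for l
    using x_pos fin that by (metis finite_Diff prod_zero_iff less_irrefl)
  show ?thesis
  proof (cases "restrict z ?P = restrict x ?P")
    case True
    have "(\<Prod>l\<in>N - {i}. w l (z l)) = (\<Prod>l\<in>N - {i}. if z l = 1 then weight_field w i l else 1)"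
    proof (rule prod.cong)
      fix l assume l: "l \<in> N - {i}"
      have "w l (z l) \<noteq> 0"
      proof (cases "l \<in> ?P")
        case True
        then show ?thesis
          using fun_cong[OF \<open>restrict z ?P = restrict x ?P\<close>, of l] x_nonzero l by simp
      next
        case False
        then show ?thesis
          using l cube_value[OF z, of l] by (auto simp: pinned_sites_def)
      qed
      then show "w l (z l) = (if z l = 1 then weight_field w i l else 1)"
        using w l cube_value[OF z, of l] by (auto simp: pin_field_weights_def weight_field_def)
    qed simp
    also have "\<dots> = field_factor N (weight_field w i) z"
      using prod.remove[OF fin i, of "\<lambda>l. if z l = 1 then weight_field w i l else 1"]
      by (simp add: field_factor_def weight_field_def)
    finally show ?thesis
      using True by simp
  next
    case False
    then obtain l where l: "l \<in> ?P" "z l \<noteq> x l"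
      by (auto simp: fun_eq_iff restrict_def split: if_splits)
    then have "l \<in> N - {i}"
      by (simp add: pinned_sites_def)
    then have "w l (z l) = 0"
      using l x_nonzero[OF \<open>l \<in> N - {i}\<close>] cube_value[OF z, of l] cube_value[OF x, of l] by (auto simp: pinned_sites_def)
    then have "(\<Prod>l\<in>N - {i}. w l (z l)) = 0"
      using \<open>l \<in> N - {i}\<close> fin by (intro prod_zero) auto
    then show ?thesis
      using False by simp
  qed
qed

lemma weighted_mass_eq_marg_tilt:
  assumes dist: "is_dist N \<mu>" and i: "i \<in> N" and w: "pin_field_weights N i w"
    and x: "x \<in> cube N" and x_pos: "0 < (\<Prod>l\<in>N - {i}. w l (x l))"
  defines "P \<equiv> pinned_sites N w i" and "F \<equiv> field_factor N (weight_field w i)"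
  shows "weighted_mass N \<mu> w i c =
    (\<Sum>y\<in>cube N. \<mu> y * F y) * marg N (tilt N (weight_field w i) \<mu>) (insert i P) ((restrict x P)(i := c))"
proof -
  define Z where "Z = (\<Sum>y\<in>cube N. \<mu> y * F y)"
  have fin: "finite N"
    using dist by (simp add: is_dist_def)
  have F_pos: "0 < F z" for z
    unfolding F_def by (rule field_factor_pos) (simp add: weight_field_bounds[OF w])
  have Z_pos: "0 < Z"
    unfolding Z_def using tilt_normaliser_pos[OF dist F_pos] .
  have iP: "i \<notin> P"
    by (simp add: P_def pinned_sites_def)
  have "weighted_mass N \<mu> w i c = (\<Sum>z\<in>{z\<in>cube N. z i = c}. if restrict z P = restrict x P then \<mu> z * F z else 0)"
    unfolding weighted_mass_def P_def F_def
    by (rule sum.cong) (auto simp: weight_prod_eq_pinned_field[OF fin i w x x_pos])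
  also have "\<dots> = (\<Sum>z\<in>{z\<in>{z\<in>cube N. z i = c}. restrict z P = restrict x P}. \<mu> z * F z)"
    by (rule sum.inter_filter[symmetric]) (simp add: finite_cube[OF fin])
  also have "\<dots> = (\<Sum>z\<in>{z\<in>cube N. restrict z P = restrict x P \<and> z i = c}. Z * tilt N (weight_field w i) \<mu> z)"
    using Z_pos by (intro sum.cong) (auto simp: tilt_eq_field_factor[OF fin] Z_def F_def)
  also have "\<dots> = Z * marg N (tilt N (weight_field w i) \<mu>) (insert i P) ((restrict x P)(i := c))"
    by (simp only: marg_insert[OF restrict_extensional iP] sum_distrib_left)
  finally show ?thesis
    unfolding Z_def .
qed

lemma completely_marg_stable_flip_bounds:
  assumes dist: "is_dist N \<mu>" and stable: "completely_marg_stable N \<zeta> \<mu>" and i: "i \<in> N"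
    and w: "pin_field_weights N i w" and x: "x \<in> cube N" "x i = 1"
    and x_pos: "0 < (\<Prod>l\<in>N - {i}. w l (x l))"
  shows "\<mu> x \<le> \<zeta> * \<mu> (x(i := -1))"
    and "\<mu> x * weighted_mass N \<mu> w i (-1) \<le> \<zeta> * \<mu> (x(i := -1)) * weighted_mass N \<mu> w i 1"
proof -
  let ?P = "pinned_sites N w i" and ?F = "field_factor N (weight_field w i)"
  define Z where "Z = (\<Sum>y\<in>cube N. \<mu> y * ?F y)"
  define \<nu> where "\<nu> = tilt N (weight_field w i) \<mu>"
  have fin: "finite N" and \<mu>_nonneg: "\<forall>y\<in>cube N. 0 \<le> \<mu> y"
    using dist by (auto simp: is_dist_def)
  have \<nu>_stable: "marg_stable N \<zeta> \<nu>"
    using stable weight_field_bounds[OF w] by (simp add: completely_marg_stable_def \<nu>_def)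
  have F_pos: "0 < ?F z" for z
    by (rule field_factor_pos) (simp add: weight_field_bounds[OF w])
  have Z_pos: "0 < Z"
    unfolding Z_def using tilt_normaliser_pos[OF dist F_pos] .
  have \<nu>_nonneg: "\<forall>z\<in>cube N. 0 \<le> \<nu> z"
    using \<mu>_nonneg F_pos Z_pos by (simp add: \<nu>_def tilt_eq_field_factor[OF fin] Z_def[symmetric] less_imp_le)
  have "?F (x(i := -1)) = ?F x"
    unfolding field_factor_def by (rule prod.cong) (auto simp: x(2) weight_field_def)
  then have \<nu>_x: "\<nu> x = \<mu> x * (?F x / Z)" "\<nu> (x(i := -1)) = \<mu> (x(i := -1)) * (?F x / Z)"
    by (simp_all add: \<nu>_def tilt_eq_field_factor[OF fin] Z_def)
  have P: "?P \<subseteq> N - {i}"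
    by (auto simp: pinned_sites_def)
  have "\<mu> x * (?F x / Z) \<le> (\<zeta> * \<mu> (x(i := -1))) * (?F x / Z)"
    using marg_stable_flip_bounds(1)[OF \<nu>_stable fin \<nu>_nonneg i x P] unfolding \<nu>_x by (simp add: mult.assoc)
  moreover have "0 < ?F x / Z"
    using F_pos Z_pos by simp
  ultimately show "\<mu> x \<le> \<zeta> * \<mu> (x(i := -1))"
    by (rule mult_right_le_imp_le)
  show "\<mu> x * weighted_mass N \<mu> w i (-1) \<le> \<zeta> * \<mu> (x(i := -1)) * weighted_mass N \<mu> w i 1"
    using marg_stable_flip_bounds(2)[OF \<nu>_stable fin \<nu>_nonneg i x P] F_pos[of x] Z_pos
    unfolding \<nu>_x weighted_mass_eq_marg_tilt[OF dist i w x(1) x_pos] Z_def[symmetric] \<nu>_def[symmetric]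
    by (simp add: field_simps)
qed

section \<open>The block structure of the \<open>k\<close>-transformation\<close>

text \<open>A map \<open>f \<in> N \<rightarrow>\<^sub>E {0..k}\<close> encodes the configuration of \<open>N \<times> {1..k}\<close> whose block \<open>l\<close> has its
  only \<open>+1\<close> at position \<open>f l\<close>, the value \<open>f l = 0\<close> encoding an all \<open>-1\<close> block.\<close>

definition block_config :: "'i set \<Rightarrow> nat \<Rightarrow> ('i \<Rightarrow> nat) \<Rightarrow> ('i \<times> nat \<Rightarrow> int)" where
  "block_config N k f = (\<lambda>p\<in>N \<times> {1..k}. if snd p = f (fst p) then 1 else -1)"

definition occupied_blocks :: "'i set \<Rightarrow> ('i \<Rightarrow> nat) \<Rightarrow> ('i \<Rightarrow> int)" where
  "occupied_blocks N f = (\<lambda>l\<in>N. if 1 \<le> f l then 1 else -1)"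

lemma occupied_blocks_in_cube: "occupied_blocks N f \<in> cube N"
  by (auto simp: occupied_blocks_def cube_def)

lemma inj_on_block_config: "inj_on (block_config N k) (N \<rightarrow>\<^sub>E {0..k})"
proof (rule inj_onI)
  fix f g assume f: "f \<in> N \<rightarrow>\<^sub>E {0..k}" and g: "g \<in> N \<rightarrow>\<^sub>E {0..k}"
    and eq: "block_config N k f = block_config N k g"
  have "f \<in> extensional N" "g \<in> extensional N"
    using f g by (simp_all add: PiE_iff)
  then show "f = g"
  proof (rule extensionalityI)
    fix l assume l: "l \<in> N"
    show "f l = g l"
    proof (rule ccontr)
      assume ne: "f l \<noteq> g l"
      define j where "j = max (f l) (g l)"
      have "j \<in> {1..k}"
        using f g l ne by (auto simp: j_def PiE_iff max_def)
      then show False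
        using fun_cong[OF eq, of "(l, j)"] l ne by (auto simp: block_config_def j_def max_def split: if_splits)
    qed
  qed
qed

lemma sum_single_plus_eq_iff:
  fixes J :: "nat set"
  assumes "card {j\<in>J. y j = (1::int)} \<le> 1" "finite J" "j \<in> J" "0 \<notin> J"
  shows "(\<Sum>{j\<in>J. y j = 1}) = j \<longleftrightarrow> y j = 1"
proof -
  have at_most_one: "a = b" if "a \<in> J" "b \<in> J" "y a = 1" "y b = 1" for a b
    using assms(1,2) card_le_Suc0_iff_eq[of "{j\<in>J. y j = 1}"] that by auto
  show ?thesis
  proof (cases "\<exists>j0\<in>J. y j0 = 1")
    case True
    then obtain j0 where "j0 \<in> J" "y j0 = 1" by blast
    then have "{j\<in>J. y j = 1} = {j0}"
      using at_most_one by blast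
    then show ?thesis
      using at_most_one \<open>j0 \<in> J\<close> \<open>y j0 = 1\<close> assms(3) by auto
  next
    case False
    then have "{j\<in>J. y j = 1} = {}"
      by blast
    then show ?thesis
      using False assms(3,4) by (metis sum.empty)
  qed
qed

lemma single_plus_config_in_block_configs:
  assumes y: "y \<in> cube (N \<times> {1..k})" and single: "\<And>l. l \<in> N \<Longrightarrow> card {j\<in>{1..k}. y (l, j) = 1} \<le> 1"
  shows "y \<in> block_config N k ` (N \<rightarrow>\<^sub>E {0..k})"
proof
  \<comment> \<open>summing the at most one position of a \<open>+1\<close> in block \<open>l\<close> recovers it, or gives \<open>0\<close>\<close>
  define f where "f = (\<lambda>l\<in>N. \<Sum>{j\<in>{1..k}. y (l, j) = 1})"
  have f_eq: "f l = j \<longleftrightarrow> y (l, j) = 1" if "l \<in> N" "j \<in> {1..k}" for l j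
    using sum_single_plus_eq_iff[OF single[OF that(1)]] that by (simp add: f_def)
  have "f l \<le> k" if "l \<in> N" for l
  proof (cases "\<exists>j\<in>{1..k}. y (l, j) = 1")
    case True
    then show ?thesis
      using f_eq[OF that] by fastforce
  next
    case False
    then have no_plus: "{j\<in>{1..k}. y (l, j) = 1} = {}"
      by blast
    show ?thesis
      unfolding f_def restrict_apply'[OF that] no_plus by simp
  qed
  then show "f \<in> N \<rightarrow>\<^sub>E {0..k}"
    by (simp add: f_def)
  show "y = block_config N k f"
  proof
    fix p show "y p = block_config N k f p"
    proof (cases "p \<in> N \<times> {1..k}")
      case True
      then show ?thesis
        using f_eq cube_value[OF y True] by (cases p) (auto simp: block_config_def)
    next
      case False
      have "y \<in> extensional (N \<times> {1..k})"
        using y by (simp add: cube_def PiE_iff)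
      then show ?thesis
        using False by (simp add: block_config_def extensional_arb[of y])
    qed
  qed
qed

lemma block_config_image:
  "block_config N k ` (N \<rightarrow>\<^sub>E {0..k}) =
    {y\<in>cube (N \<times> {1..k}). \<forall>l\<in>N. card {j\<in>{1..k}. y (l, j) = 1} \<le> 1}"
proof (intro equalityI subsetI)
  fix y assume "y \<in> block_config N k ` (N \<rightarrow>\<^sub>E {0..k})"
  then obtain f where y: "y = block_config N k f"
    by blast
  have "card {j\<in>{1..k}. y (l, j) = 1} \<le> card {f l}" if "l \<in> N" for l
    using that by (intro card_mono) (auto simp: y block_config_def)
  moreover have "y \<in> cube (N \<times> {1..k})"
    by (auto simp: y block_config_def cube_def)
  ultimately show "y \<in> {y\<in>cube (N \<times> {1..k}). \<forall>l\<in>N. card {j\<in>{1..k}. y (l, j) = 1} \<le> 1}"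
    by simp
qed (auto intro: single_plus_config_in_block_configs)

lemma Rd_block_config:
  assumes "f \<in> N \<rightarrow>\<^sub>E {0..k}"
  shows "Rd N \<mu> k (block_config N k f) =
    \<mu> (occupied_blocks N f) / real k ^ card {l\<in>N. occupied_blocks N f l = 1}"
proof -
  have "block_config N k f \<in> block_config N k ` (N \<rightarrow>\<^sub>E {0..k})"
    using assms by blast
  moreover have "rd_proj N k (block_config N k f) = occupied_blocks N f"
    using assms by (auto simp: rd_proj_def occupied_blocks_def block_config_def fun_eq_iff PiE_iff)
  ultimately show ?thesis
    unfolding block_config_image Rd_def by simp
qed

lemma restrict_block_config_eq_iff:
  assumes "\<Lambda> \<subseteq> N \<times> {1..k}" "\<sigma> \<in> extensional \<Lambda>"
  shows "restrict (block_config N k f) \<Lambda> = \<sigma> \<longleftrightarrow> (\<forall>(l, j)\<in>\<Lambda>. \<sigma> (l, j) = (if j = f l then 1 else -1))"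
proof -
  have "restrict (block_config N k f) \<Lambda> p = \<sigma> p \<longleftrightarrow> (p \<in> \<Lambda> \<longrightarrow> \<sigma> p = (if snd p = f (fst p) then 1 else -1))" for p
  proof (cases "p \<in> \<Lambda>")
    case True
    then have "p \<in> N \<times> {1..k}"
      using assms(1) by blast
    then show ?thesis
      using True by (auto simp: block_config_def)
  qed (simp add: extensional_arb[OF assms(2)])
  then show ?thesis
    unfolding fun_eq_iff by (simp add: Ball_def split_paired_all)
qed

lemma occupied_blocks_eq_iff:
  assumes "x \<in> cube N"
  shows "occupied_blocks N f = x \<longleftrightarrow> (\<forall>l\<in>N. 1 \<le> f l \<longleftrightarrow> x l = 1)"
proof -
  have "occupied_blocks N f l = x l \<longleftrightarrow> (l \<in> N \<longrightarrow> (1 \<le> f l \<longleftrightarrow> x l = 1))" for l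
    using cube_value[OF assms, of l] extensional_arb[of x N l] assms
    by (cases "l \<in> N") (auto simp: occupied_blocks_def cube_def PiE_iff)
  then show ?thesis
    unfolding fun_eq_iff by blast
qed

definition compatible_positions :: "nat \<Rightarrow> ('i \<times> nat) set \<Rightarrow> ('i \<times> nat \<Rightarrow> int) \<Rightarrow> 'i \<Rightarrow> int \<Rightarrow> nat set" where
  "compatible_positions k \<Lambda> \<sigma> l c =
    {j\<in>{0..k}. (1 \<le> j \<longleftrightarrow> c = 1) \<and> (\<forall>j'. (l, j') \<in> \<Lambda> \<longrightarrow> \<sigma> (l, j') = (if j' = j then 1 else -1))}"

text \<open>The probability under \<open>Rd\<close> that block \<open>l\<close> agrees with \<open>\<sigma>\<close>, given \<open>X\<^sub>l = c\<close>: the \<open>+1\<close> of an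
  occupied block sits at one of \<open>k\<close> equally likely positions.\<close>

definition block_weight :: "nat \<Rightarrow> ('i \<times> nat) set \<Rightarrow> ('i \<times> nat \<Rightarrow> int) \<Rightarrow> 'i \<Rightarrow> int \<Rightarrow> real" where
  "block_weight k \<Lambda> \<sigma> l c = card (compatible_positions k \<Lambda> \<sigma> l c) / (if c = 1 then real k else 1)"

lemma block_config_fiber:
  assumes x: "x \<in> cube N" and \<Lambda>: "\<Lambda> \<subseteq> N \<times> {1..k}" and \<sigma>: "\<sigma> \<in> extensional \<Lambda>"
  shows "{f\<in>N \<rightarrow>\<^sub>E {0..k}. restrict (block_config N k f) \<Lambda> = \<sigma> \<and> occupied_blocks N f = x} =
    (\<Pi>\<^sub>E l\<in>N. compatible_positions k \<Lambda> \<sigma> l (x l))"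
proof (intro equalityI subsetI)
  fix f assume "f \<in> {f\<in>N \<rightarrow>\<^sub>E {0..k}. restrict (block_config N k f) \<Lambda> = \<sigma> \<and> occupied_blocks N f = x}"
  then show "f \<in> (\<Pi>\<^sub>E l\<in>N. compatible_positions k \<Lambda> \<sigma> l (x l))"
    unfolding restrict_block_config_eq_iff[OF \<Lambda> \<sigma>] occupied_blocks_eq_iff[OF x]
    by (auto simp: PiE_iff compatible_positions_def)
next
  fix f assume "f \<in> (\<Pi>\<^sub>E l\<in>N. compatible_positions k \<Lambda> \<sigma> l (x l))"
  then show "f \<in> {f\<in>N \<rightarrow>\<^sub>E {0..k}. restrict (block_config N k f) \<Lambda> = \<sigma> \<and> occupied_blocks N f = x}"
    unfolding restrict_block_config_eq_iff[OF \<Lambda> \<sigma>] occupied_blocks_eq_iff[OF x]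
    using \<Lambda> by (auto simp: PiE_iff compatible_positions_def)
qed

lemma marg_Rd:
  assumes fin: "finite N" and \<Lambda>: "\<Lambda> \<subseteq> N \<times> {1..k}" and \<sigma>: "\<sigma> \<in> extensional \<Lambda>"
  shows "marg (N \<times> {1..k}) (Rd N \<mu> k) \<Lambda> \<sigma> = (\<Sum>x\<in>cube N. \<mu> x * (\<Prod>l\<in>N. block_weight k \<Lambda> \<sigma> l (x l)))"
proof -
  let ?F = "N \<rightarrow>\<^sub>E {0..k}"
  let ?F\<sigma> = "{f\<in>?F. restrict (block_config N k f) \<Lambda> = \<sigma>}"
  let ?fiber = "\<lambda>x. {f\<in>?F\<sigma>. occupied_blocks N f = x}"
  have "marg (N \<times> {1..k}) (Rd N \<mu> k) \<Lambda> \<sigma> = (\<Sum>y\<in>{y\<in>block_config N k ` ?F. restrict y \<Lambda> = \<sigma>}. Rd N \<mu> k y)"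
    unfolding marg_def
  proof (rule sum.mono_neutral_right)
    show "\<forall>y\<in>{y\<in>cube (N \<times> {1..k}). restrict y \<Lambda> = \<sigma>} - {y\<in>block_config N k ` ?F. restrict y \<Lambda> = \<sigma>}.
        Rd N \<mu> k y = 0"
      unfolding block_config_image by (auto simp: Rd_def)
  qed (auto simp: block_config_image finite_cube fin)
  also have "{y\<in>block_config N k ` ?F. restrict y \<Lambda> = \<sigma>} = block_config N k ` ?F\<sigma>"
    by auto
  also have "(\<Sum>y\<in>block_config N k ` ?F\<sigma>. Rd N \<mu> k y) = (\<Sum>f\<in>?F\<sigma>. Rd N \<mu> k (block_config N k f))"
    using inj_on_subset[OF inj_on_block_config, of ?F\<sigma> N k] by (simp add: sum.reindex)
  also have "\<dots> = (\<Sum>x\<in>cube N. \<Sum>f\<in>?fiber x. Rd N \<mu> k (block_config N k f))"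
    using fin occupied_blocks_in_cube by (intro sum.group[symmetric]) (auto simp: finite_PiE finite_cube)
  also have "\<dots> = (\<Sum>x\<in>cube N. \<mu> x * (\<Prod>l\<in>N. block_weight k \<Lambda> \<sigma> l (x l)))"
  proof (rule sum.cong[OF refl])
    fix x assume x: "x \<in> cube N"
    have fiber: "?fiber x = (\<Pi>\<^sub>E l\<in>N. compatible_positions k \<Lambda> \<sigma> l (x l))"
      using block_config_fiber[OF x \<Lambda> \<sigma>] by auto
    have "(\<Sum>f\<in>?fiber x. Rd N \<mu> k (block_config N k f)) =
        (\<Sum>f\<in>?fiber x. \<mu> x / real k ^ card {l\<in>N. x l = 1})"
      by (rule sum.cong) (auto simp: Rd_block_config)
    also have "\<dots> = (\<Prod>l\<in>N. real (card (compatible_positions k \<Lambda> \<sigma> l (x l)))) * \<mu> x /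
        (\<Prod>l\<in>N. if x l = 1 then real k else 1)"
      unfolding fiber by (simp add: card_PiE[OF fin] prod.inter_filter[OF fin, symmetric])
    also have "\<dots> = \<mu> x * (\<Prod>l\<in>N. block_weight k \<Lambda> \<sigma> l (x l))"
      unfolding block_weight_def prod_dividef by simp
    finally show "(\<Sum>f\<in>?fiber x. Rd N \<mu> k (block_config N k f)) = \<mu> x * (\<Prod>l\<in>N. block_weight k \<Lambda> \<sigma> l (x l))" .
  qed
  finally show ?thesis .
qed

lemma block_weight_nonneg: "0 \<le> block_weight k \<Lambda> \<sigma> l c"
  by (simp add: block_weight_def)

lemma block_weight_le_one:
  assumes "1 \<le> k"
  shows "block_weight k \<Lambda> \<sigma> l c \<le> 1"
proof -
  have "card (compatible_positions k \<Lambda> \<sigma> l c) \<le> card (if c = 1 then {1..k} else {0})"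
    by (intro card_mono) (auto simp: compatible_positions_def)
  then show ?thesis
    using assms by (auto simp: block_weight_def split: if_splits)
qed

lemma pin_field_block_weights: "1 \<le> k \<Longrightarrow> pin_field_weights N i (block_weight k \<Lambda> \<sigma>)"
proof -
  assume k: "1 \<le> k"
  have "card (compatible_positions k \<Lambda> \<sigma> l (-1)) \<le> card {0::nat}" for l
    by (intro card_mono) (auto simp: compatible_positions_def)
  then have "card (compatible_positions k \<Lambda> \<sigma> l (-1)) \<in> {0, 1}" for l
    by (simp add: le_Suc_eq)
  then have "block_weight k \<Lambda> \<sigma> l (-1) \<in> {0, 1}" for l
    by (auto simp: block_weight_def)
  then show ?thesis
    by (simp add: pin_field_weights_def block_weight_nonneg block_weight_le_one[OF k])
qed

lemma block_weight_pos_restrict: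
  assumes "S \<subseteq> \<Lambda>" "0 < block_weight k \<Lambda> \<sigma> l c"
  shows "0 < block_weight k S (restrict \<sigma> S) l c"
proof -
  have "compatible_positions k \<Lambda> \<sigma> l c \<subseteq> compatible_positions k S (restrict \<sigma> S) l c"
    using assms(1) by (auto simp: compatible_positions_def)
  moreover have "compatible_positions k \<Lambda> \<sigma> l c \<noteq> {}" and k: "k > 0 \<or> c \<noteq> 1"
    using assms(2) by (auto simp: block_weight_def)
  moreover have "finite (compatible_positions k S (restrict \<sigma> S) l c)"
    by (simp add: compatible_positions_def)
  ultimately have "0 < card (compatible_positions k S (restrict \<sigma> S) l c)"
    by (metis card_gt_0_iff subset_empty)
  then show ?thesis
    using k by (auto simp: block_weight_def)
qed

lemma block_weight_fun_upd_other:
  "l \<noteq> i \<Longrightarrow> block_weight k (insert (i, j) \<Lambda>) (\<sigma>((i, j) := c)) l = block_weight k \<Lambda> \<sigma> l"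
  by (simp add: fun_eq_iff block_weight_def compatible_positions_def)

definition block_all_minus :: "('i \<times> nat) set \<Rightarrow> ('i \<times> nat \<Rightarrow> int) \<Rightarrow> 'i \<Rightarrow> bool" where
  "block_all_minus \<Lambda> \<sigma> i \<longleftrightarrow> (\<forall>j. (i, j) \<in> \<Lambda> \<longrightarrow> \<sigma> (i, j) = -1)"

lemma block_weight_plus_site:
  assumes j: "j \<in> {1..k}" and new: "(i, j) \<notin> \<Lambda>"
  shows "block_weight k (insert (i, j) \<Lambda>) (\<sigma>((i, j) := 1)) i 1 = (if block_all_minus \<Lambda> \<sigma> i then 1 / k else 0)"
proof -
  have "compatible_positions k (insert (i, j) \<Lambda>) (\<sigma>((i, j) := 1)) i 1 =
      (if block_all_minus \<Lambda> \<sigma> i then {j} else {})"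
    using j new by (auto simp: compatible_positions_def block_all_minus_def split: if_splits)
  then show ?thesis
    by (simp add: block_weight_def)
qed

lemma block_weight_plus_site_minus:
  assumes j: "j \<in> {1..k}"
  shows "block_weight k (insert (i, j) \<Lambda>) (\<sigma>((i, j) := 1)) i (-1) = 0"
proof -
  have "compatible_positions k (insert (i, j) \<Lambda>) (\<sigma>((i, j) := 1)) i (-1) = {}"
  proof (rule equals0I)
    fix j0 assume "j0 \<in> compatible_positions k (insert (i, j) \<Lambda>) (\<sigma>((i, j) := 1)) i (-1)"
    then have "j0 = 0" "(\<sigma>((i, j) := 1)) (i, j) = (if j = j0 then 1 else -1)"
      by (auto simp: compatible_positions_def)
    then show False
      using j by simp
  qed
  then show ?thesis
    by (simp add: block_weight_def)
qed

lemma block_weight_minus_site_minus: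
  assumes j: "j \<in> {1..k}" and new: "(i, j) \<notin> \<Lambda>" and unpinned_0: "(i, 0) \<notin> \<Lambda>"
  shows "block_weight k (insert (i, j) \<Lambda>) (\<sigma>((i, j) := -1)) i (-1) = (if block_all_minus \<Lambda> \<sigma> i then 1 else 0)"
proof -
  let ?C = "compatible_positions k (insert (i, j) \<Lambda>) (\<sigma>((i, j) := -1)) i (-1)"
  have off: "j' \<noteq> 0" "j' \<noteq> j" if "(i, j') \<in> \<Lambda>" for j'
    using new unpinned_0 that by (metis, metis)
  have "j0 \<in> ?C \<longleftrightarrow> j0 = 0 \<and> block_all_minus \<Lambda> \<sigma> i" for j0
  proof
    assume "j0 \<in> ?C"
    then have j0: "j0 = 0" and agree: "\<And>j'. (i, j') \<in> \<Lambda> \<Longrightarrow> \<sigma> (i, j') = (if j' = j0 then 1 else -1)"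
      using off(2) by (auto simp: compatible_positions_def)
    have "\<sigma> (i, j') = -1" if "(i, j') \<in> \<Lambda>" for j'
      using agree[OF that] off(1)[OF that] j0 by simp
    with j0 show "j0 = 0 \<and> block_all_minus \<Lambda> \<sigma> i"
      by (simp add: block_all_minus_def)
  next
    assume "j0 = 0 \<and> block_all_minus \<Lambda> \<sigma> i"
    then show "j0 \<in> ?C"
      using j off by (auto simp: compatible_positions_def block_all_minus_def)
  qed
  then have "compatible_positions k (insert (i, j) \<Lambda>) (\<sigma>((i, j) := -1)) i (-1) =
      (if block_all_minus \<Lambda> \<sigma> i then {0} else {})"
    by auto
  then show ?thesis
    by (simp add: block_weight_def)
qed

section \<open>Marginal stability of the \<open>k\<close>-transformation\<close>

lemma cross_ratio_bound:
  fixes A B A' B' c c' \<zeta> :: real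
  assumes "0 \<le> A" "0 \<le> A'" "0 \<le> c" "0 \<le> c'" "c' \<le> 1" "0 \<le> \<zeta>"
    and bound: "A \<le> \<zeta> * B" and cross: "A * B' \<le> \<zeta> * B * A'"
  shows "A * (c' * A' + B') \<le> 2 * \<zeta> * A' * (c * A + B)"
proof -
  have "A * (c' * A' + B') = c' * (A * A') + A * B'"
    by (simp add: algebra_simps)
  also have "\<dots> \<le> A * A' + \<zeta> * B * A'"
    using assms by (intro add_mono mult_left_le_one_le) auto
  also have "\<dots> \<le> 2 * \<zeta> * A' * B"
    using mult_right_mono[OF bound \<open>0 \<le> A'\<close>] by (simp add: algebra_simps)
  also have "\<dots> \<le> 2 * \<zeta> * A' * (c * A + B)"
    using assms by (intro mult_left_mono) auto
  finally show ?thesis .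
qed

lemma ereal_ratio_Rd_bounds:
  fixes A B A' B' c c' k \<zeta> :: real
  assumes nonneg: "0 \<le> A" "0 \<le> B" "0 \<le> A'" "0 \<le> B'" "0 \<le> c" "0 \<le> c'"
    and "c' \<le> 1" "1 \<le> k" "0 < \<zeta>" and bound: "A \<le> \<zeta> * B" and cross: "A * B' \<le> \<zeta> * B * A'"
    and total: "0 < A / k + (c * A + B)"
  shows "ereal_ratio (A / k) (c * A + B) \<le> ereal (2 * \<zeta>)"
    and "ereal_ratio (A / k) (c * A + B) \<le> ereal (2 * \<zeta>) * ereal_ratio (A' / k) (c' * A' + B')"
proof -
  have "0 < B"
    using nonneg bound total by (cases "B = 0") auto
  then have D: "0 < c * A + B"
    using nonneg by (simp add: add_nonneg_pos)
  have "A \<le> \<zeta> * (k * (c * A + B))"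
  proof -
    have "c * A + B \<le> k * (c * A + B)"
      using D \<open>1 \<le> k\<close> by (simp add: mult_le_cancel_right1)
    then have "B \<le> k * (c * A + B)"
      using mult_nonneg_nonneg[OF nonneg(5,1)] by linarith
    then show ?thesis
      using bound \<open>0 < \<zeta>\<close> by (meson order_trans mult_left_mono less_imp_le)
  qed
  then have "A / k / (c * A + B) \<le> \<zeta>"
    using D \<open>1 \<le> k\<close> by (simp add: pos_divide_le_eq mult.assoc)
  then show "ereal_ratio (A / k) (c * A + B) \<le> ereal (2 * \<zeta>)"
    using D \<open>0 < \<zeta>\<close> by (simp add: ereal_ratio_def)
  show "ereal_ratio (A / k) (c * A + B) \<le> ereal (2 * \<zeta>) * ereal_ratio (A' / k) (c' * A' + B')"
  proof (cases "c' * A' + B' = 0")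
    case True
    then show ?thesis
      using \<open>0 < \<zeta>\<close> by (simp add: ereal_ratio_def)
  next
    case False
    then have D': "0 < c' * A' + B'"
      using nonneg by (simp add: order.strict_iff_order)
    have "A / (c * A + B) \<le> 2 * \<zeta> * A' / (c' * A' + B')"
      unfolding pos_divide_le_eq[OF D] times_divide_eq_left pos_le_divide_eq[OF D']
      using cross_ratio_bound[OF nonneg(1,3,5,6) \<open>c' \<le> 1\<close> _ bound cross] \<open>0 < \<zeta>\<close>
      by (simp add: algebra_simps)
    then have "A / (c * A + B) / k \<le> 2 * \<zeta> * A' / (c' * A' + B') / k"
      using \<open>1 \<le> k\<close> by (intro divide_right_mono) auto
    then show ?thesis
      using False D by (simp add: ereal_ratio_def mult.commute)
  qed
qed

lemma marg_Rd_insert: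
  fixes \<mu> :: "('i \<Rightarrow> int) \<Rightarrow> real"
  assumes fin: "finite N" and k: "1 \<le> k" and \<Lambda>: "\<Lambda> \<subseteq> N \<times> {1..k}" and i: "i \<in> N"
    and j: "j \<in> {1..k}" and new: "(i, j) \<notin> \<Lambda>" and \<sigma>: "\<sigma> \<in> extensional \<Lambda>"
  defines "A \<equiv> weighted_mass N \<mu> (block_weight k \<Lambda> \<sigma>) i 1"
    and "B \<equiv> weighted_mass N \<mu> (block_weight k \<Lambda> \<sigma>) i (-1)"
  shows "marg (N \<times> {1..k}) (Rd N \<mu> k) (insert (i, j) \<Lambda>) (\<sigma>((i, j) := 1)) =
      (if block_all_minus \<Lambda> \<sigma> i then A / k else 0)"
    and "\<exists>c\<in>{0..1}. marg (N \<times> {1..k}) (Rd N \<mu> k) (insert (i, j) \<Lambda>) (\<sigma>((i, j) := -1)) =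
      c * A + (if block_all_minus \<Lambda> \<sigma> i then B else 0)"
proof -
  have unpinned_0: "(i, 0) \<notin> \<Lambda>"
    using \<Lambda> by auto
  have \<Lambda>': "insert (i, j) \<Lambda> \<subseteq> N \<times> {1..k}"
    using \<Lambda> i j by auto
  have \<sigma>': "\<sigma>((i, j) := c) \<in> extensional (insert (i, j) \<Lambda>)" for c
    using \<sigma> by (auto simp: extensional_def)
  have mass: "weighted_mass N \<mu> (block_weight k (insert (i, j) \<Lambda>) (\<sigma>((i, j) := c))) i c' =
      weighted_mass N \<mu> (block_weight k \<Lambda> \<sigma>) i c'" for c c'
    by (rule weighted_mass_cong) (simp add: block_weight_fun_upd_other)
  have marg: "marg (N \<times> {1..k}) (Rd N \<mu> k) (insert (i, j) \<Lambda>) (\<sigma>((i, j) := c)) =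
      block_weight k (insert (i, j) \<Lambda>) (\<sigma>((i, j) := c)) i 1 * A +
      block_weight k (insert (i, j) \<Lambda>) (\<sigma>((i, j) := c)) i (-1) * B" for c
    unfolding marg_Rd[OF fin \<Lambda>' \<sigma>'] sum_weight_prod_split[OF fin i] mass A_def B_def ..
  show "marg (N \<times> {1..k}) (Rd N \<mu> k) (insert (i, j) \<Lambda>) (\<sigma>((i, j) := 1)) =
      (if block_all_minus \<Lambda> \<sigma> i then A / k else 0)"
    unfolding marg block_weight_plus_site[OF j new] block_weight_plus_site_minus[OF j]
    by simp
  show "\<exists>c\<in>{0..1}. marg (N \<times> {1..k}) (Rd N \<mu> k) (insert (i, j) \<Lambda>) (\<sigma>((i, j) := -1)) =
      c * A + (if block_all_minus \<Lambda> \<sigma> i then B else 0)"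
  proof
    let ?c = "block_weight k (insert (i, j) \<Lambda>) (\<sigma>((i, j) := -1)) i 1"
    show "?c \<in> {0..1}"
      by (simp add: block_weight_nonneg block_weight_le_one[OF k])
    show "marg (N \<times> {1..k}) (Rd N \<mu> k) (insert (i, j) \<Lambda>) (\<sigma>((i, j) := -1)) =
        ?c * A + (if block_all_minus \<Lambda> \<sigma> i then B else 0)"
      unfolding marg block_weight_minus_site_minus[OF j new unpinned_0] by simp
  qed
qed

lemma Rd_weighted_mass_bounds:
  fixes \<sigma> :: "'i \<times> nat \<Rightarrow> int"
  assumes dist: "is_dist N \<mu>" and stable: "completely_marg_stable N \<zeta> \<mu>" and i: "i \<in> N"
    and k: "1 \<le> k" and S: "S \<subseteq> \<Lambda>"
  defines "A \<equiv> weighted_mass N \<mu> (block_weight k \<Lambda> \<sigma>) i 1"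
    and "B \<equiv> weighted_mass N \<mu> (block_weight k \<Lambda> \<sigma>) i (-1)"
    and "A\<^sub>S \<equiv> weighted_mass N \<mu> (block_weight k S (restrict \<sigma> S)) i 1"
    and "B\<^sub>S \<equiv> weighted_mass N \<mu> (block_weight k S (restrict \<sigma> S)) i (-1)"
  shows "A \<le> \<zeta> * B" and "A * B\<^sub>S \<le> \<zeta> * B * A\<^sub>S"
proof -
  have fin: "finite N" and \<mu>_nonneg: "\<forall>x\<in>cube N. 0 \<le> \<mu> x"
    using dist by (auto simp: is_dist_def)
  have w: "\<forall>l\<in>N - {i}. 0 \<le> block_weight k \<Lambda> \<sigma> l 1 \<and> 0 \<le> block_weight k \<Lambda> \<sigma> l (-1)"
    by (simp add: block_weight_nonneg)
  \<comment> \<open>the flip bounds for the coarser weights of \<open>S\<close> hold wherever the weights of \<open>\<Lambda>\<close> are positive\<close>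
  have bounds: "\<mu> x \<le> \<zeta> * \<mu> (x(i := -1)) \<and> \<mu> x * B\<^sub>S \<le> \<zeta> * \<mu> (x(i := -1)) * A\<^sub>S"
    if x: "x \<in> cube N" "x i = 1" and pos: "0 < (\<Prod>l\<in>N - {i}. block_weight k \<Lambda> \<sigma> l (x l))" for x
  proof -
    have "0 < (\<Prod>l\<in>N - {i}. block_weight k S (restrict \<sigma> S) l (x l))"
    proof (rule prod_pos)
      fix l assume "l \<in> N - {i}"
      then have "block_weight k \<Lambda> \<sigma> l (x l) \<noteq> 0"
        using pos fin by (metis finite_Diff prod_zero_iff less_irrefl)
      then show "0 < block_weight k S (restrict \<sigma> S) l (x l)"
        using block_weight_nonneg[of k \<Lambda> \<sigma> l "x l"] by (intro block_weight_pos_restrict[OF S]) simp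
    qed
    then show ?thesis
      using completely_marg_stable_flip_bounds[OF dist stable i pin_field_block_weights[OF k] x]
      unfolding A\<^sub>S_def B\<^sub>S_def by blast
  qed
  show "A \<le> \<zeta> * B"
    using weighted_mass_le_weighted_mass[OF fin i \<mu>_nonneg w, of 1 \<zeta> 1] bounds
    unfolding A_def B_def by simp
  show "A * B\<^sub>S \<le> \<zeta> * B * A\<^sub>S"
    using weighted_mass_le_weighted_mass[OF fin i \<mu>_nonneg w, of B\<^sub>S \<zeta> A\<^sub>S] bounds
    unfolding A_def B_def by simp
qed

lemma Rd_nonneg: "\<forall>x\<in>cube N. 0 \<le> \<mu> x \<Longrightarrow> 0 \<le> Rd N \<mu> k y"
proof -
  assume "\<forall>x\<in>cube N. 0 \<le> \<mu> x"
  moreover have "rd_proj N k y \<in> cube N"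
    by (auto simp: rd_proj_def cube_def)
  ultimately show ?thesis
    by (simp add: Rd_def)
qed

lemma supp_marg_restrict:
  assumes "finite N" "\<forall>x\<in>cube N. 0 \<le> \<nu> x" "S \<subseteq> \<Lambda>" "\<sigma> \<in> supp_marg N \<nu> \<Lambda>"
  shows "restrict \<sigma> S \<in> supp_marg N \<nu> S"
  using assms marg_antimono[OF assms(1-3), of \<sigma>] by (auto simp: supp_marg_def cube_def PiE_iff)

lemma ratio_Rd_site:
  fixes \<mu> :: "('i \<Rightarrow> int) \<Rightarrow> real"
  assumes fin: "finite N" and k: "1 \<le> k" and i: "i \<in> N" and j: "j \<in> {1..k}"
    and \<Lambda>: "\<Lambda> \<subseteq> N \<times> {1..k} - {(i, j)}" and \<sigma>: "\<sigma> \<in> supp_marg (N \<times> {1..k}) (Rd N \<mu> k) \<Lambda>"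
  defines "A \<equiv> weighted_mass N \<mu> (block_weight k \<Lambda> \<sigma>) i 1"
    and "B \<equiv> weighted_mass N \<mu> (block_weight k \<Lambda> \<sigma>) i (-1)"
  shows "\<not> block_all_minus \<Lambda> \<sigma> i \<Longrightarrow> ratio (N \<times> {1..k}) (Rd N \<mu> k) \<Lambda> \<sigma> (i, j) = 0"
    and "block_all_minus \<Lambda> \<sigma> i \<Longrightarrow> \<exists>c\<in>{0..1}. 0 < A / k + (c * A + B) \<and>
      ratio (N \<times> {1..k}) (Rd N \<mu> k) \<Lambda> \<sigma> (i, j) = ereal_ratio (A / k) (c * A + B)"
proof -
  have \<Lambda>': "\<Lambda> \<subseteq> N \<times> {1..k}" "(i, j) \<notin> \<Lambda>" and ij: "(i, j) \<in> N \<times> {1..k}"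
    using \<Lambda> i j by auto
  have \<sigma>_ext: "\<sigma> \<in> extensional \<Lambda>" and pos: "0 < marg (N \<times> {1..k}) (Rd N \<mu> k) \<Lambda> \<sigma>"
    using \<sigma> by (auto simp: supp_marg_def cube_def PiE_iff)
  obtain c where c: "c \<in> {0..1}" and minus: "marg (N \<times> {1..k}) (Rd N \<mu> k) (insert (i, j) \<Lambda>) (\<sigma>((i, j) := -1)) =
      c * A + (if block_all_minus \<Lambda> \<sigma> i then B else 0)"
    using marg_Rd_insert(2)[OF fin k \<Lambda>'(1) i j \<Lambda>'(2) \<sigma>_ext, of \<mu>] unfolding A_def B_def by blast
  note plus = marg_Rd_insert(1)[OF fin k \<Lambda>'(1) i j \<Lambda>'(2) \<sigma>_ext, of \<mu>, folded A_def]
  have total: "0 < (if block_all_minus \<Lambda> \<sigma> i then A / k else 0) + (c * A + (if block_all_minus \<Lambda> \<sigma> i then B else 0))"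
    using pos marg_split[OF finite_SigmaI[OF fin finite_atLeastAtMost] ij \<Lambda>'(2) \<sigma>_ext] plus minus by simp
  have ratio: "ratio (N \<times> {1..k}) (Rd N \<mu> k) \<Lambda> \<sigma> (i, j) =
      ereal_ratio (if block_all_minus \<Lambda> \<sigma> i then A / k else 0) (c * A + (if block_all_minus \<Lambda> \<sigma> i then B else 0))"
    using ratio_eq_ereal_ratio[OF pos] plus minus by simp
  show "ratio (N \<times> {1..k}) (Rd N \<mu> k) \<Lambda> \<sigma> (i, j) = 0" if "\<not> block_all_minus \<Lambda> \<sigma> i"
    using that total ratio by (auto simp: ereal_ratio_def zero_ereal_def)
  show "\<exists>c\<in>{0..1}. 0 < A / k + (c * A + B) \<and>
      ratio (N \<times> {1..k}) (Rd N \<mu> k) \<Lambda> \<sigma> (i, j) = ereal_ratio (A / k) (c * A + B)"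
    if "block_all_minus \<Lambda> \<sigma> i"
    using that c total ratio by auto
qed

lemma Rd_site_stable:
  assumes dist: "is_dist N \<mu>" and \<zeta>: "1 < \<zeta>" and stable: "completely_marg_stable N \<zeta> \<mu>"
    and k: "1 \<le> k" and i: "i \<in> N" and j: "j \<in> {1..k}"
    and S: "S \<subseteq> \<Lambda>" and \<Lambda>: "\<Lambda> \<subseteq> N \<times> {1..k} - {(i, j)}"
    and \<sigma>: "\<sigma> \<in> supp_marg (N \<times> {1..k}) (Rd N \<mu> k) \<Lambda>"
  shows "ratio (N \<times> {1..k}) (Rd N \<mu> k) \<Lambda> \<sigma> (i, j) \<le> ereal (2 * \<zeta>) \<and>
    ratio (N \<times> {1..k}) (Rd N \<mu> k) \<Lambda> \<sigma> (i, j)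
      \<le> ereal (2 * \<zeta>) * ratio (N \<times> {1..k}) (Rd N \<mu> k) S (restrict \<sigma> S) (i, j)"
proof -
  let ?M = "N \<times> {1..k}" and ?\<sigma>\<^sub>S = "restrict \<sigma> S"
  have fin: "finite N" and \<mu>_nonneg: "\<forall>x\<in>cube N. 0 \<le> \<mu> x"
    using dist by (auto simp: is_dist_def)
  have \<nu>_nonneg: "\<forall>y\<in>cube ?M. 0 \<le> Rd N \<mu> k y"
    using Rd_nonneg[OF \<mu>_nonneg] by blast
  have S': "S \<subseteq> ?M - {(i, j)}"
    using S \<Lambda> by auto
  have \<sigma>\<^sub>S: "?\<sigma>\<^sub>S \<in> supp_marg ?M (Rd N \<mu> k) S"
    using supp_marg_restrict[OF finite_SigmaI[OF fin finite_atLeastAtMost] \<nu>_nonneg S \<sigma>] .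
  show ?thesis
  proof (cases "block_all_minus \<Lambda> \<sigma> i")
    case True
    define A where "A = weighted_mass N \<mu> (block_weight k \<Lambda> \<sigma>) i 1"
    define B where "B = weighted_mass N \<mu> (block_weight k \<Lambda> \<sigma>) i (-1)"
    define A\<^sub>S where "A\<^sub>S = weighted_mass N \<mu> (block_weight k S ?\<sigma>\<^sub>S) i 1"
    define B\<^sub>S where "B\<^sub>S = weighted_mass N \<mu> (block_weight k S ?\<sigma>\<^sub>S) i (-1)"
    have "block_all_minus S ?\<sigma>\<^sub>S i"
      using True S by (auto simp: block_all_minus_def)
    then obtain c' where "c' \<in> {0..1}"
      and ratio_S: "ratio ?M (Rd N \<mu> k) S ?\<sigma>\<^sub>S (i, j) = ereal_ratio (A\<^sub>S / k) (c' * A\<^sub>S + B\<^sub>S)"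
      using ratio_Rd_site(2)[OF fin k i j S' \<sigma>\<^sub>S, folded A\<^sub>S_def B\<^sub>S_def] by blast
    moreover obtain c where "c \<in> {0..1}" and "0 < A / k + (c * A + B)"
      and ratio: "ratio ?M (Rd N \<mu> k) \<Lambda> \<sigma> (i, j) = ereal_ratio (A / k) (c * A + B)"
      using ratio_Rd_site(2)[OF fin k i j \<Lambda> \<sigma> True, folded A_def B_def] by blast
    moreover have "A \<le> \<zeta> * B" "A * B\<^sub>S \<le> \<zeta> * B * A\<^sub>S"
      unfolding A_def B_def A\<^sub>S_def B\<^sub>S_def by (rule Rd_weighted_mass_bounds[OF dist stable i k S])+
    moreover have "0 \<le> A" "0 \<le> B" "0 \<le> A\<^sub>S" "0 \<le> B\<^sub>S"
      unfolding A_def B_def A\<^sub>S_def B\<^sub>S_def by (simp_all add: weighted_mass_nonneg \<mu>_nonneg block_weight_nonneg)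
    ultimately show ?thesis
      using ereal_ratio_Rd_bounds[of A B A\<^sub>S B\<^sub>S c c' k \<zeta>] \<zeta> k by (simp add: ratio ratio_S)
  next
    case False
    then have "ratio ?M (Rd N \<mu> k) \<Lambda> \<sigma> (i, j) = 0"
      by (rule ratio_Rd_site(1)[OF fin k i j \<Lambda> \<sigma>])
    moreover have "0 \<le> ereal (2 * \<zeta>) * ratio ?M (Rd N \<mu> k) S ?\<sigma>\<^sub>S (i, j)"
      using ratio_nonneg[OF \<nu>_nonneg] \<zeta> by simp
    ultimately show ?thesis
      using \<zeta> by simp
  qed
qed

theorem lemma6p3:
  fixes N :: "'i set" and \<mu> :: "('i \<Rightarrow> int) \<Rightarrow> real" and \<zeta> :: real and k :: nat
  assumes "is_dist N \<mu>"
    and "\<zeta> > 1"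
    and "completely_marg_stable N \<zeta> \<mu>"
    and "k \<ge> 1"
  shows "marg_stable (N \<times> {1..k}) (2 * \<zeta>) (Rd N \<mu> k)"
  unfolding marg_stable_def using Rd_site_stable[OF assms] by auto

end
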